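(* Every strictly convex reflexive ordered Banach space $X$ with a closed proper generating cone is a $\upsilon$-quasi-lattice.
   Context: An ordered Banach space is a real Banach space $X$ with a cone $X_+$ ($X_++X_+\subseteq X_+$, $\lambda X_+\subseteq X_+$ for $\lambda\ge0$) that is proper ($X_+\cap(-X_+)=\{0\}$); $x\le y$ means $y-x\in X_+$; the cone is generating if $X=X_+-X_+$. $X$ is strictly convex if $\|x+y\|=\|x\|+\|y\|$ implies one of $x,y$ is a non-negative multiple of the other. For $A\subseteq X$, $\upsilon(A)$ is the set of upper bounds of $A$. Let $\sigma_{x,y}(z)=\|z-x\|+\|z-y\|$. A pre-ordered Banach space with closed cone is a $\upsilon$-quasi-lattice if for every $x,y$ the set $\upsilon(\{x,y\})$ is non-empty and there exists a unique element of $\upsilon(\{x,y\})$ minimizing $\sigma_{x,y}$ on $\upsilon(\{x,y\})$. *)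

theory Defs
  imports "HOL-Analysis.Analysis"
begin

definition is_cone :: "'a::real_vector set \<Rightarrow> bool" where
  "is_cone K \<longleftrightarrow> (\<forall>x\<in>K. \<forall>y\<in>K. x + y \<in> K) \<and> (\<forall>x\<in>K. \<forall>c::real. c \<ge> 0 \<longrightarrow> c *\<^sub>R x \<in> K)"

definition proper_cone :: "'a::real_vector set \<Rightarrow> bool" where
  "proper_cone K \<longleftrightarrow> K \<inter> uminus ` K = {0}"

definition generating_cone :: "'a::real_vector set \<Rightarrow> bool" where
  "generating_cone K \<longleftrightarrow> (\<forall>x. \<exists>p\<in>K. \<exists>q\<in>K. x = p - q)"

definition cone_le :: "'a::real_vector set \<Rightarrow> 'a \<Rightarrow> 'a \<Rightarrow> bool" where
  "cone_le K x y \<longleftrightarrow> y - x \<in> K"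

definition upper_bounds :: "'a::real_vector set \<Rightarrow> 'a set \<Rightarrow> 'a set" where
  "upper_bounds K A = {z. \<forall>a\<in>A. cone_le K a z}"

definition sigma :: "'a::real_normed_vector \<Rightarrow> 'a \<Rightarrow> 'a \<Rightarrow> real" where
  "sigma x y z = norm (z - x) + norm (z - y)"

definition strictly_convex :: "'a::real_normed_vector itself \<Rightarrow> bool" where
  "strictly_convex _ \<longleftrightarrow> (\<forall>x y::'a. norm (x + y) = norm x + norm y \<longrightarrow>
      (\<exists>c::real. c \<ge> 0 \<and> x = c *\<^sub>R y) \<or> (\<exists>c::real. c \<ge> 0 \<and> y = c *\<^sub>R x))"

definition reflexive_space :: "'a::real_normed_vector itself \<Rightarrow> bool" where
  "reflexive_space _ \<longleftrightarrow> (\<forall>\<Phi> :: ('a \<Rightarrow>\<^sub>L real) \<Rightarrow>\<^sub>L real. \<exists>x::'a. \<forall>f. blinfun_apply \<Phi> f = blinfun_apply f x)"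

definition upsilon_quasi_lattice :: "'a::real_normed_vector set \<Rightarrow> bool" where
  "upsilon_quasi_lattice K \<longleftrightarrow> closed K \<and>
     (\<forall>x y. upper_bounds K {x, y} \<noteq> {} \<and>
        (\<exists>!z. z \<in> upper_bounds K {x, y} \<and>
              (\<forall>w\<in>upper_bounds K {x, y}. sigma x y z \<le> sigma x y w)))"

end

theory Submission
  imports Defs
begin

text \<open>The upper bounds of \<open>{x, y}\<close> form a nonempty (the cone is generating) closed convex
  set \<open>U\<close>, on which \<open>\<sigma>\<^sub>x\<^sub>y\<close> is continuous, convex and coercive. In a reflexive space a
  decreasing sequence of nonempty bounded closed convex sets has nonempty intersection (by a
  Hahn--Banach argument on the dual), so \<open>\<sigma>\<^sub>x\<^sub>y\<close> attains its infimum on \<open>U\<close>.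
  If \<open>z\<^sub>1\<close> and \<open>z\<^sub>2\<close> both minimise, so does their midpoint, which forces
  \<open>\<parallel>a + b\<parallel> = \<parallel>a\<parallel> + \<parallel>b\<parallel>\<close> for \<open>a = z\<^sub>1 - x\<close>, \<open>b = z\<^sub>2 - x\<close>, and likewise with \<open>y\<close>.
  By strict convexity \<open>a\<close>, \<open>b\<close> lie on a ray of the cone, so the longer of them dominates the
  shorter; since \<open>\<sigma>\<^sub>x\<^sub>y z\<^sub>1 = \<sigma>\<^sub>x\<^sub>y z\<^sub>2\<close>, the \<open>x\<close>-pair and the \<open>y\<close>-pair are ordered in opposite
  directions, making both \<open>z\<^sub>1 - z\<^sub>2\<close> and \<open>z\<^sub>2 - z\<^sub>1\<close> positive; properness gives \<open>z\<^sub>1 = z\<^sub>2\<close>.\<close>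

section \<open>Sublinear functionals and the Hahn--Banach theorem\<close>

definition sublinear :: "('v::real_vector \<Rightarrow> real) \<Rightarrow> bool" where
  "sublinear p \<longleftrightarrow> (\<forall>x y. p (x + y) \<le> p x + p y) \<and> (\<forall>c x. c > 0 \<longrightarrow> p (c *\<^sub>R x) = c * p x)"

lemma sublinear_add: "sublinear p \<Longrightarrow> p (x + y) \<le> p x + p y"
  by (simp add: sublinear_def)

lemma sublinear_zero:
  assumes "sublinear p"
  shows "p 0 = 0"
proof -
  have "p ((2::real) *\<^sub>R 0) = 2 * p 0"
    using assms unfolding sublinear_def by (metis zero_less_numeral)
  then show ?thesis by simp
qed

lemma sublinear_scaleR: "sublinear p \<Longrightarrow> c \<ge> 0 \<Longrightarrow> p (c *\<^sub>R x) = c * p x"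
  by (cases "c = 0") (auto simp: sublinear_zero sublinear_def)

lemma sublinear_minus_le: "sublinear p \<Longrightarrow> - p (- x) \<le> p x"
  using sublinear_add[of p x "- x"] sublinear_zero[of p] by simp

lemma sublinear_Inf:
  fixes S :: "'v::real_vector \<Rightarrow> real set"
  assumes ne: "\<And>v. S v \<noteq> {}" and bdd: "\<And>v. bdd_below (S v)"
    and add: "\<And>v w a b. a \<in> S v \<Longrightarrow> b \<in> S w \<Longrightarrow> \<exists>e\<in>S (v + w). e \<le> a + b"
    and scale: "\<And>v a c. a \<in> S v \<Longrightarrow> c > 0 \<Longrightarrow> c * a \<in> S (c *\<^sub>R v)"
  shows "sublinear (\<lambda>v. Inf (S v))"
  unfolding sublinear_def
proof (intro conjI allI impI)
  fix v w
  have "Inf (S (v + w)) - b \<le> Inf (S v)" if b: "b \<in> S w" for b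
  proof (rule cInf_greatest[OF ne])
    fix a assume "a \<in> S v"
    then obtain e where "e \<in> S (v + w)" "e \<le> a + b" using add b by blast
    then have "Inf (S (v + w)) \<le> a + b" using cInf_lower[OF _ bdd] by fastforce
    then show "Inf (S (v + w)) - b \<le> a" by simp
  qed
  then have "Inf (S (v + w)) - Inf (S v) \<le> Inf (S w)"
    by (intro cInf_greatest[OF ne]) (auto simp: algebra_simps)
  then show "Inf (S (v + w)) \<le> Inf (S v) + Inf (S w)" by simp
next
  fix c :: real and v assume c: "c > 0"
  have "Inf (S (c *\<^sub>R v)) / c \<le> Inf (S v)"
  proof (rule cInf_greatest[OF ne])
    fix a assume "a \<in> S v"
    then have "Inf (S (c *\<^sub>R v)) \<le> c * a" using scale[OF _ c] cInf_lower[OF _ bdd] by blast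
    then show "Inf (S (c *\<^sub>R v)) / c \<le> a" using c by (simp add: divide_le_eq mult.commute)
  qed
  moreover have "c * Inf (S v) \<le> Inf (S (c *\<^sub>R v))"
  proof (rule cInf_greatest[OF ne])
    fix a assume a: "a \<in> S (c *\<^sub>R v)"
    have "(1/c) * a \<in> S v" using scale[OF a, of "1/c"] c by simp
    then have "Inf (S v) \<le> (1/c) * a" using cInf_lower[OF _ bdd] by blast
    then show "c * Inf (S v) \<le> a" using c by (simp add: field_simps)
  qed
  ultimately show "Inf (S (c *\<^sub>R v)) = c * Inf (S v)" using c by (simp add: field_simps)
qed

lemma sublinear_odd_imp_linear:
  assumes q: "sublinear q" and odd: "\<And>v. q (- v) = - q v"
  shows "linear q"
proof (rule linearI)
  fix x y
  show "q (x + y) = q x + q y"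
    using sublinear_add[OF q, of x y] sublinear_add[OF q, of "- x" "- y"] odd[of "x + y"] odd[of x] odd[of y]
    by (simp only: minus_add_distrib)
next
  fix c :: real and x
  show "q (c *\<^sub>R x) = c *\<^sub>R q x"
  proof (cases "c \<ge> 0")
    case True
    then show ?thesis using sublinear_scaleR[OF q True] by simp
  next
    case False
    then have "q ((- c) *\<^sub>R (- x)) = (- c) * q (- x)" by (intro sublinear_scaleR[OF q]) simp
    then show ?thesis using odd[of x] by simp
  qed
qed

text \<open>For fixed \<open>v\<close>, \<open>x \<mapsto> inf\<^sub>t\<^sub>\<ge>\<^sub>0 q (x + t v) - t q v\<close> is sublinear and below \<open>q\<close>,
  so it equals \<open>q\<close>; at \<open>x = -v\<close> this gives \<open>q (-v) \<le> -q v\<close>.\<close>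
lemma minimal_sublinear_imp_linear:
  fixes q :: "'v::real_vector \<Rightarrow> real"
  assumes q: "sublinear q"
    and minimal: "\<And>r. sublinear r \<Longrightarrow> r \<le> q \<Longrightarrow> r = q"
  shows "linear q"
proof (rule sublinear_odd_imp_linear[OF q])
  fix v
  define S where "S x = {q (x + t *\<^sub>R v) - t * q v | t. t \<ge> 0}" for x
  have qS: "q x \<in> S x" for x
    unfolding S_def by (rule CollectI, rule exI[of _ 0]) simp
  have lower: "- q (- x) \<le> a" if "a \<in> S x" for a x
  proof -
    obtain t where t: "t \<ge> 0" "a = q (x + t *\<^sub>R v) - t * q v" using \<open>a \<in> S x\<close> S_def by auto
    have "q (t *\<^sub>R v) \<le> q (x + t *\<^sub>R v) + q (- x)"
      using sublinear_add[OF q, of "x + t *\<^sub>R v" "- x"] by simp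
    then show ?thesis using t sublinear_scaleR[OF q t(1)] by simp
  qed
  have bdd: "bdd_below (S x)" for x using lower unfolding bdd_below_def by blast
  have "sublinear (\<lambda>x. Inf (S x))"
  proof (rule sublinear_Inf[OF _ bdd])
    fix x w a b assume "a \<in> S x" and "b \<in> S w"
    then obtain s t where s: "s \<ge> 0" "a = q (x + s *\<^sub>R v) - s * q v"
      and t: "t \<ge> 0" "b = q (w + t *\<^sub>R v) - t * q v" unfolding S_def by auto
    have "q ((x + w) + (s + t) *\<^sub>R v) \<le> q (x + s *\<^sub>R v) + q (w + t *\<^sub>R v)"
      using sublinear_add[OF q, of "x + s *\<^sub>R v" "w + t *\<^sub>R v"] by (simp add: algebra_simps)
    then have "q ((x + w) + (s + t) *\<^sub>R v) - (s + t) * q v \<le> a + b"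
      using s t by (simp add: algebra_simps)
    moreover have "q ((x + w) + (s + t) *\<^sub>R v) - (s + t) * q v \<in> S (x + w)"
      unfolding S_def using s t by (intro CollectI exI[of _ "s + t"]) auto
    ultimately show "\<exists>e\<in>S (x + w). e \<le> a + b" by blast
  next
    fix x a and c :: real assume "a \<in> S x" and c: "c > 0"
    then obtain s where s: "s \<ge> 0" "a = q (x + s *\<^sub>R v) - s * q v" unfolding S_def by auto
    have "c *\<^sub>R x + (c * s) *\<^sub>R v = c *\<^sub>R (x + s *\<^sub>R v)" by (simp add: algebra_simps)
    then have "c * a = q (c *\<^sub>R x + (c * s) *\<^sub>R v) - (c * s) * q v"
      using sublinear_scaleR[OF q, of c "x + s *\<^sub>R v"] c s by (simp add: right_diff_distrib)
    then show "c * a \<in> S (c *\<^sub>R x)" unfolding S_def using s c by (intro CollectI exI[of _ "c * s"]) auto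
  qed (use qS in blast)
  moreover have "(\<lambda>x. Inf (S x)) \<le> q"
    using cInf_lower[OF qS bdd] by (simp add: le_fun_def)
  ultimately have Inf_S: "Inf (S x) = q x" for x using minimal by metis
  have "- q v \<in> S (- v)"
    unfolding S_def by (rule CollectI, rule exI[of _ 1]) (simp add: sublinear_zero[OF q])
  then have "q (- v) \<le> - q v" using cInf_lower[OF _ bdd] Inf_S by metis
  then show "q (- v) = - q v" using sublinear_minus_le[OF q, of "- v"] by simp
qed

lemma sublinear_INF_chain:
  fixes C :: "('v::real_vector \<Rightarrow> real) set"
  assumes "C \<noteq> {}" and sub: "\<And>q. q \<in> C \<Longrightarrow> sublinear q"
    and chain: "\<And>q r. q \<in> C \<Longrightarrow> r \<in> C \<Longrightarrow> q \<le> r \<or> r \<le> q"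
  shows "sublinear (\<lambda>x. INF q\<in>C. q x)" and "\<And>r. r \<in> C \<Longrightarrow> (\<lambda>x. INF q\<in>C. q x) \<le> r"
proof -
  obtain q0 where q0: "q0 \<in> C" using \<open>C \<noteq> {}\<close> by blast
  have "- q0 (- x) \<le> q x" if "q \<in> C" for q x
    using chain[OF that q0] le_funD[of q q0 "- x"] le_funD[of q0 q x]
      sublinear_minus_le[OF sub[OF that], of x] sublinear_minus_le[OF sub[OF q0], of x] by linarith
  then have bdd: "bdd_below ((\<lambda>q. q x) ` C)" for x by (auto simp: bdd_below_def)
  show "(\<lambda>x. INF q\<in>C. q x) \<le> r" if "r \<in> C" for r
    using cINF_lower[OF bdd that] by (simp add: le_fun_def)
  show "sublinear (\<lambda>x. INF q\<in>C. q x)"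
  proof (rule sublinear_Inf)
    fix v w a b assume "a \<in> (\<lambda>q. q v) ` C" and "b \<in> (\<lambda>q. q w) ` C"
    then obtain q1 q2 where q: "q1 \<in> C" "q2 \<in> C" "a = q1 v" "b = q2 w" by blast
    obtain q where "q \<in> C" "q \<le> q1" "q \<le> q2" using chain[OF q(1,2)] q(1,2) by auto
    have "q (v + w) \<le> q v + q w" by (rule sublinear_add[OF sub[OF \<open>q \<in> C\<close>]])
    also have "\<dots> \<le> a + b" using le_funD[OF \<open>q \<le> q1\<close>, of v] le_funD[OF \<open>q \<le> q2\<close>, of w] q by simp
    finally have "q (v + w) \<le> a + b" .
    then show "\<exists>e\<in>(\<lambda>q. q (v + w)) ` C. e \<le> a + b" using \<open>q \<in> C\<close> by blast
  next
    fix v a and c :: real assume "a \<in> (\<lambda>q. q v) ` C" and "c > 0"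
    then show "c * a \<in> (\<lambda>q. q (c *\<^sub>R v)) ` C" using sub by (auto simp: sublinear_def)
  qed (use \<open>C \<noteq> {}\<close> bdd in auto)
qed

theorem Hahn_Banach_sublinear:
  fixes p :: "'v::real_vector \<Rightarrow> real"
  assumes p: "sublinear p"
  shows "\<exists>f. linear f \<and> (\<forall>x. f x \<le> p x)"
proof -
  define A where "A = {q. sublinear q \<and> q \<le> p}"
  have "\<exists>m\<in>A. \<forall>q\<in>A. q \<le> m \<longrightarrow> q = m"
  proof (rule predicate_Zorn)
    show "partial_order_on A (relation_of (\<ge>) A)"
      by (rule partial_order_on_relation_ofI) auto
  next
    fix C assume C: "C \<in> Chains (relation_of (\<ge>) A)"
    show "\<exists>u\<in>A. \<forall>q\<in>C. u \<le> q"
    proof (cases "C = {}")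
      case True
      then show ?thesis using p by (auto simp: A_def)
    next
      case False
      have "C \<subseteq> A" by (rule Chains_relation_of[OF C])
      then have sub: "\<And>q. q \<in> C \<Longrightarrow> sublinear q" and below: "\<And>q. q \<in> C \<Longrightarrow> q \<le> p"
        by (auto simp: A_def)
      have chain: "q \<le> r \<or> r \<le> q" if "q \<in> C" "r \<in> C" for q r
        using C that by (auto simp: Chains_def relation_of_def)
      have INF_sub: "sublinear (\<lambda>x. INF q\<in>C. q x)"
        by (rule sublinear_INF_chain(1)) (use False sub chain in blast)+
      have INF_le: "(\<lambda>x. INF q\<in>C. q x) \<le> r" if "r \<in> C" for r
        by (rule sublinear_INF_chain(2)) (use False sub chain that in blast)+
      obtain q0 where "q0 \<in> C" using False by blast
      have "(\<lambda>x. INF q\<in>C. q x) \<le> p"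
        using INF_le[OF \<open>q0 \<in> C\<close>] below[OF \<open>q0 \<in> C\<close>] by (rule order_trans)
      then have "(\<lambda>x. INF q\<in>C. q x) \<in> A" using INF_sub by (simp add: A_def)
      then show ?thesis using INF_le by blast
    qed
  qed
  then obtain q where "q \<in> A" and minimal: "\<And>r. r \<in> A \<Longrightarrow> r \<le> q \<Longrightarrow> r = q" by blast
  then have q: "sublinear q" "q \<le> p" by (auto simp: A_def)
  have "linear q"
  proof (rule minimal_sublinear_imp_linear[OF q(1)])
    fix r assume "sublinear r" "r \<le> q"
    moreover have "r \<le> p" using \<open>r \<le> q\<close> q(2) by (rule order_trans)
    ultimately show "r = q" using minimal by (simp add: A_def)
  qed
  then show ?thesis using q(2) by (auto simp: le_fun_def)
qed

section \<open>Separation and weak compactness in reflexive spaces\<close>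

lemma linear_le_norm_imp_bounded_linear:
  fixes f :: "'v::real_normed_vector \<Rightarrow> real"
  assumes "linear f" and le: "\<And>v. f v \<le> M * norm v"
  shows "bounded_linear f"
proof -
  have "norm (f v) \<le> norm v * M" for v
    using le[of v] le[of "- v"] linear_neg[OF \<open>linear f\<close>, of v] by (simp add: abs_le_iff mult.commute)
  then show ?thesis using \<open>linear f\<close> unfolding bounded_linear_def bounded_linear_axioms_def by blast
qed

text \<open>With \<open>d\<close> the distance from \<open>z\<close> to \<open>C\<close>, this functional is sublinear, bounded by
  the norm and at most \<open>-d\<close> at each \<open>z - c\<close> with \<open>c \<in> C\<close>, so a linear functional below it
  separates \<open>z\<close> from \<open>C\<close>.\<close>
definition separating_gauge :: "'a::real_normed_vector set \<Rightarrow> 'a \<Rightarrow> real \<Rightarrow> 'a \<Rightarrow> real" where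
  "separating_gauge C z d v = Inf {norm (v + t *\<^sub>R (c - z)) - t * d | t c. t \<ge> 0 \<and> c \<in> C}"

lemma bdd_below_separating_gauge_set:
  assumes d_le: "\<And>c. c \<in> C \<Longrightarrow> d \<le> norm (c - z)"
  shows "bdd_below {norm (v + t *\<^sub>R (c - z)) - t * d | t c. t \<ge> 0 \<and> c \<in> C}"
proof (rule bdd_belowI)
  fix a assume "a \<in> {norm (v + t *\<^sub>R (c - z)) - t * d | t c. t \<ge> 0 \<and> c \<in> C}"
  then obtain t c where tc: "t \<ge> 0" "c \<in> C" "a = norm (v + t *\<^sub>R (c - z)) - t * d" by blast
  have "t * d \<le> norm (t *\<^sub>R (c - z))" using d_le[OF tc(2)] tc(1) by (simp add: mult_left_mono)
  also have "\<dots> \<le> norm (v + t *\<^sub>R (c - z)) + norm v"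
    using norm_triangle_ineq4[of "v + t *\<^sub>R (c - z)" v] by simp
  finally show "- norm v \<le> a" using tc by simp
qed

lemma separating_gauge_le:
  assumes d_le: "\<And>c. c \<in> C \<Longrightarrow> d \<le> norm (c - z)" and "t \<ge> 0" "c \<in> C"
  shows "separating_gauge C z d v \<le> norm (v + t *\<^sub>R (c - z)) - t * d"
  unfolding separating_gauge_def
  by (rule cInf_lower[OF _ bdd_below_separating_gauge_set[OF d_le]]) (use assms in blast)

lemma sublinear_separating_gauge:
  assumes convex: "convex C" and "C \<noteq> {}" and d_le: "\<And>c. c \<in> C \<Longrightarrow> d \<le> norm (c - z)"
  shows "sublinear (separating_gauge C z d)"
proof -
  define S where "S v = {norm (v + t *\<^sub>R (c - z)) - t * d | t c. t \<ge> 0 \<and> c \<in> C}" for v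
  have combine: "\<exists>c\<in>C. (s + t) *\<^sub>R (c - z) = s *\<^sub>R (c1 - z) + t *\<^sub>R (c2 - z)"
    if "s \<ge> 0" "t \<ge> 0" "c1 \<in> C" "c2 \<in> C" for s t c1 c2
  proof (cases "s + t = 0")
    case True
    then have "s = 0" "t = 0" using that by auto
    then show ?thesis using that by auto
  next
    case False
    let ?c = "(s / (s + t)) *\<^sub>R c1 + (t / (s + t)) *\<^sub>R c2"
    have "?c \<in> C"
      using convexD[OF convex that(3,4), of "s / (s + t)" "t / (s + t)"] that False
      by (simp add: add_divide_distrib[symmetric])
    moreover have "(s + t) *\<^sub>R ?c = s *\<^sub>R c1 + t *\<^sub>R c2" using False by (simp add: scaleR_add_right)
    then have "(s + t) *\<^sub>R (?c - z) = s *\<^sub>R (c1 - z) + t *\<^sub>R (c2 - z)" by (simp add: algebra_simps)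
    ultimately show ?thesis by blast
  qed
  have "sublinear (\<lambda>v. Inf (S v))"
  proof (rule sublinear_Inf)
    show "S v \<noteq> {}" for v using \<open>C \<noteq> {}\<close> unfolding S_def by blast
    show "bdd_below (S v)" for v unfolding S_def by (rule bdd_below_separating_gauge_set[OF d_le])
  next
    fix v w a b assume "a \<in> S v" "b \<in> S w"
    then obtain s t c1 c2 where st: "s \<ge> 0" "t \<ge> 0" "c1 \<in> C" "c2 \<in> C"
      and a: "a = norm (v + s *\<^sub>R (c1 - z)) - s * d" and b: "b = norm (w + t *\<^sub>R (c2 - z)) - t * d"
      unfolding S_def by blast
    obtain c where "c \<in> C" and c: "(s + t) *\<^sub>R (c - z) = s *\<^sub>R (c1 - z) + t *\<^sub>R (c2 - z)"
      using combine[OF st] by blast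
    have "v + w + (s + t) *\<^sub>R (c - z) = (v + s *\<^sub>R (c1 - z)) + (w + t *\<^sub>R (c2 - z))"
      unfolding c by (simp add: algebra_simps)
    then have "norm (v + w + (s + t) *\<^sub>R (c - z)) - (s + t) * d \<le> a + b"
      using norm_triangle_ineq[of "v + s *\<^sub>R (c1 - z)" "w + t *\<^sub>R (c2 - z)"] a b
      by (simp add: algebra_simps)
    moreover have "norm (v + w + (s + t) *\<^sub>R (c - z)) - (s + t) * d \<in> S (v + w)"
      unfolding S_def using st \<open>c \<in> C\<close> by (intro CollectI exI[of _ "s + t"] exI[of _ c]) auto
    ultimately show "\<exists>e\<in>S (v + w). e \<le> a + b" by blast
  next
    fix v a and k :: real assume "a \<in> S v" and k: "k > 0"
    then obtain s c where s: "s \<ge> 0" "c \<in> C" "a = norm (v + s *\<^sub>R (c - z)) - s * d"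
      unfolding S_def by blast
    have "k *\<^sub>R v + (k * s) *\<^sub>R (c - z) = k *\<^sub>R (v + s *\<^sub>R (c - z))" by (simp add: algebra_simps)
    then have "k * a = norm (k *\<^sub>R v + (k * s) *\<^sub>R (c - z)) - (k * s) * d"
      using k s(3) by (simp add: right_diff_distrib)
    then show "k * a \<in> S (k *\<^sub>R v)"
      unfolding S_def using s k by (intro CollectI exI[of _ "k * s"] exI[of _ c]) auto
  qed
  then show ?thesis by (simp add: S_def separating_gauge_def[abs_def])
qed

lemma separate_point_closed_convex:
  fixes C :: "'a::real_normed_vector set"
  assumes closed: "closed C" and convex: "convex C" and "C \<noteq> {}" and "z \<notin> C"
  shows "\<exists>f::'a \<Rightarrow>\<^sub>L real. \<exists>d>0. \<forall>c\<in>C. blinfun_apply f c + d \<le> blinfun_apply f z"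
proof -
  define d where "d = infdist z C"
  have "d > 0" using infdist_pos_not_in_closed[OF closed \<open>C \<noteq> {}\<close> \<open>z \<notin> C\<close>] d_def by simp
  have d_le: "d \<le> norm (c - z)" if "c \<in> C" for c
    using infdist_le[OF that, of z] by (simp add: d_def dist_norm norm_minus_commute)
  obtain c0 where "c0 \<in> C" using \<open>C \<noteq> {}\<close> by auto
  obtain \<phi> where \<phi>: "linear \<phi>" "\<And>v. \<phi> v \<le> separating_gauge C z d v"
    using Hahn_Banach_sublinear[OF sublinear_separating_gauge[OF convex \<open>C \<noteq> {}\<close> d_le]] by blast
  have "\<phi> v \<le> 1 * norm v" for v
    using \<phi>(2)[of v] separating_gauge_le[OF d_le _ \<open>c0 \<in> C\<close>, where t = 0 and v = v] by simp
  then have "bounded_linear (\<lambda>v. - \<phi> v)"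
    using \<phi>(1) by (intro bounded_linear_minus linear_le_norm_imp_bounded_linear)
  then have f: "blinfun_apply (Blinfun (\<lambda>v. - \<phi> v)) = (\<lambda>v. - \<phi> v)"
    by (rule bounded_linear_Blinfun_apply)
  have "\<phi> (z - c) \<le> - d" if "c \<in> C" for c
    using \<phi>(2)[of "z - c"] separating_gauge_le[OF d_le _ that, where t = 1 and v = "z - c"] by simp
  then have "\<forall>c\<in>C. blinfun_apply (Blinfun (\<lambda>v. - \<phi> v)) c + d \<le> blinfun_apply (Blinfun (\<lambda>v. - \<phi> v)) z"
    unfolding f using linear_diff[OF \<phi>(1)] by fastforce
  then show ?thesis using \<open>d > 0\<close> by blast
qed

lemma blinfun_le_norm_mult:
  assumes "\<And>c. c \<in> A \<Longrightarrow> norm c \<le> M"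
  shows "\<forall>c\<in>A. blinfun_apply f c \<le> M * norm f"
proof
  fix c assume "c \<in> A"
  have "blinfun_apply f c \<le> norm f * norm c" using norm_blinfun[of f c] by simp
  also have "\<dots> \<le> M * norm f" using assms[OF \<open>c \<in> A\<close>] by (metis mult.commute mult_left_mono norm_ge_zero)
  finally show "blinfun_apply f c \<le> M * norm f" .
qed

lemma decseq_bounded_normE:
  fixes C :: "nat \<Rightarrow> 'a::real_normed_vector set"
  assumes "decseq C" and "bounded (C 0)"
  obtains M where "\<And>c k. c \<in> C k \<Longrightarrow> norm c \<le> M"
  using decseqD[OF assms(1), of 0] assms(2) unfolding bounded_iff by blast

definition eventual_bound :: "(nat \<Rightarrow> 'a::real_normed_vector set) \<Rightarrow> ('a \<Rightarrow>\<^sub>L real) \<Rightarrow> real" where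
  "eventual_bound C f = Inf {a. \<exists>k. \<forall>c\<in>C k. blinfun_apply f c \<le> a}"

lemma bdd_below_eventual_bound_set:
  fixes C :: "nat \<Rightarrow> 'a::real_normed_vector set" and f :: "'a \<Rightarrow>\<^sub>L real"
  assumes ne: "\<And>k. C k \<noteq> {}" and "decseq C" and "bounded (C 0)"
  shows "bdd_below {a. \<exists>k. \<forall>c\<in>C k. blinfun_apply f c \<le> a}"
proof -
  obtain M where M: "\<And>c k. c \<in> C k \<Longrightarrow> norm c \<le> M"
    using decseq_bounded_normE[OF assms(2,3)] by blast
  show ?thesis
  proof (rule bdd_belowI)
    fix a assume "a \<in> {a. \<exists>k. \<forall>c\<in>C k. blinfun_apply f c \<le> a}"
    then obtain k where k: "\<forall>c\<in>C k. blinfun_apply f c \<le> a" by blast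
    obtain c where c: "c \<in> C k" using ne by blast
    have "- (norm f * norm c) \<le> blinfun_apply f c" using norm_blinfun[of f c] by simp
    moreover have "norm f * norm c \<le> norm f * M" using M[OF c] by (simp add: mult_left_mono)
    ultimately show "- (norm f * M) \<le> a" using k c by fastforce
  qed
qed

lemma eventual_bound_le:
  fixes C :: "nat \<Rightarrow> 'a::real_normed_vector set" and f :: "'a \<Rightarrow>\<^sub>L real"
  assumes "\<And>k. C k \<noteq> {}" and "decseq C" and "bounded (C 0)"
    and "\<forall>c\<in>C k. blinfun_apply f c \<le> a"
  shows "eventual_bound C f \<le> a"
  unfolding eventual_bound_def
  by (rule cInf_lower[OF _ bdd_below_eventual_bound_set[OF assms(1-3)]]) (use assms(4) in blast)

lemma sublinear_eventual_bound:
  fixes C :: "nat \<Rightarrow> 'a::real_normed_vector set"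
  assumes ne: "\<And>k. C k \<noteq> {}" and "decseq C" and "bounded (C 0)"
  shows "sublinear (eventual_bound C)"
proof -
  obtain M where M: "\<And>c k. c \<in> C k \<Longrightarrow> norm c \<le> M"
    using decseq_bounded_normE[OF assms(2,3)] by blast
  define S where "S f = {a. \<exists>k. \<forall>c\<in>C k. blinfun_apply f c \<le> a}" for f :: "'a \<Rightarrow>\<^sub>L real"
  have "sublinear (\<lambda>f. Inf (S f))"
  proof (rule sublinear_Inf)
    show "S f \<noteq> {}" for f
      using blinfun_le_norm_mult[where A = "C 0", OF M[of _ 0]] unfolding S_def by blast
    show "bdd_below (S f)" for f
      unfolding S_def by (rule bdd_below_eventual_bound_set[OF ne assms(2,3)])
  next
    fix f g a b assume "a \<in> S f" "b \<in> S g"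
    then obtain k1 k2 where k1: "\<forall>c\<in>C k1. blinfun_apply f c \<le> a" and k2: "\<forall>c\<in>C k2. blinfun_apply g c \<le> b"
      unfolding S_def by blast
    have "C (max k1 k2) \<subseteq> C k1" "C (max k1 k2) \<subseteq> C k2"
      using decseqD[OF \<open>decseq C\<close>] by auto
    then have "\<forall>c\<in>C (max k1 k2). blinfun_apply (f + g) c \<le> a + b"
      using k1 k2 by (fastforce simp: blinfun.add_left intro: add_mono)
    then show "\<exists>e\<in>S (f + g). e \<le> a + b" unfolding S_def by blast
  next
    fix f a and t :: real assume "a \<in> S f" and t: "t > 0"
    then obtain k where "\<forall>c\<in>C k. blinfun_apply f c \<le> a" unfolding S_def by blast
    then have "\<forall>c\<in>C k. blinfun_apply (t *\<^sub>R f) c \<le> t * a"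
      using t by (simp add: blinfun.scaleR_left mult_left_mono)
    then show "t * a \<in> S (t *\<^sub>R f)" unfolding S_def by blast
  qed
  then show ?thesis by (simp add: S_def eventual_bound_def[abs_def])
qed

text \<open>A linear functional below \<open>eventual_bound C\<close> is bounded, hence by reflexivity it is
  evaluation at some \<open>z\<close>, and separation puts \<open>z\<close> into every \<open>C k\<close>.\<close>
lemma reflexive_decseq_Inter_nonempty:
  fixes C :: "nat \<Rightarrow> 'a::real_normed_vector set"
  assumes refl: "reflexive_space TYPE('a)"
    and closed: "\<And>k. closed (C k)" and convex: "\<And>k. convex (C k)" and ne: "\<And>k. C k \<noteq> {}"
    and "decseq C" and "bounded (C 0)"
  shows "(\<Inter>k. C k) \<noteq> {}"
proof -
  obtain M where M: "\<And>c k. c \<in> C k \<Longrightarrow> norm c \<le> M"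
    using decseq_bounded_normE[OF \<open>decseq C\<close> \<open>bounded (C 0)\<close>] by blast
  note le_bound = eventual_bound_le[OF ne \<open>decseq C\<close> \<open>bounded (C 0)\<close>]
  obtain \<phi> where \<phi>: "linear \<phi>" "\<And>f. \<phi> f \<le> eventual_bound C f"
    using Hahn_Banach_sublinear[OF sublinear_eventual_bound[OF ne \<open>decseq C\<close> \<open>bounded (C 0)\<close>]]
    by blast
  have "\<phi> f \<le> M * norm f" for f
    using \<phi>(2)[of f] le_bound[OF blinfun_le_norm_mult[where A = "C 0", OF M[of _ 0]]]
    by (rule order_trans)
  then have "bounded_linear \<phi>" using \<phi>(1) by (rule linear_le_norm_imp_bounded_linear[rotated])
  moreover obtain z where "\<And>f. blinfun_apply (Blinfun \<phi>) f = blinfun_apply f z"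
    using refl unfolding reflexive_space_def by blast
  ultimately have z: "\<phi> f = blinfun_apply f z" for f by (simp add: bounded_linear_Blinfun_apply)
  have "z \<in> C k" for k
  proof (rule ccontr)
    assume "z \<notin> C k"
    then obtain f :: "'a \<Rightarrow>\<^sub>L real" and d where "d > 0"
      and "\<forall>c\<in>C k. blinfun_apply f c + d \<le> blinfun_apply f z"
      using separate_point_closed_convex[OF closed convex ne] by blast
    then have sep: "\<forall>c\<in>C k. blinfun_apply f c \<le> blinfun_apply f z - d" by (simp add: le_diff_eq)
    then have "\<phi> f \<le> blinfun_apply f z - d" using \<phi>(2)[of f] le_bound[OF sep] by linarith
    then show False using z \<open>d > 0\<close> by simp
  qed
  then show ?thesis by blast
qed

lemma convex_on_sublevel:
  assumes "convex_on S f"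
  shows "convex {w \<in> S. f w \<le> c}"
  unfolding convex_alt
proof (intro ballI allI impI)
  fix x y and t :: real
  assume x: "x \<in> {w \<in> S. f w \<le> c}" and y: "y \<in> {w \<in> S. f w \<le> c}" and t: "0 \<le> t \<and> t \<le> 1"
  have "(1 - t) *\<^sub>R x + t *\<^sub>R y \<in> S"
    using convex_on_imp_convex[OF assms] x y t by (auto simp: convex_alt)
  moreover have "f ((1 - t) *\<^sub>R x + t *\<^sub>R y) \<le> (1 - t) * f x + t * f y"
    using convex_onD[OF assms] x y t by auto
  moreover have "(1 - t) * f x + t * f y \<le> (1 - t) * c + t * c"
    using x y t by (intro add_mono mult_left_mono) auto
  ultimately show "(1 - t) *\<^sub>R x + t *\<^sub>R y \<in> {w \<in> S. f w \<le> c}" by (simp add: algebra_simps)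
qed

lemma reflexive_convex_on_attains_min:
  fixes f :: "'a::real_normed_vector \<Rightarrow> real"
  assumes refl: "reflexive_space TYPE('a)"
    and "closed S" "S \<noteq> {}"
    and "continuous_on S f" "convex_on S f" "bdd_below (f ` S)"
    and coercive: "\<And>c. bounded {w \<in> S. f w \<le> c}"
  shows "\<exists>z\<in>S. \<forall>w\<in>S. f z \<le> f w"
proof -
  define m where "m = Inf (f ` S)"
  define C where "C k = {w \<in> S. f w \<le> m + 1 / real (Suc k)}" for k
  have "(\<Inter>k. C k) \<noteq> {}"
  proof (rule reflexive_decseq_Inter_nonempty[OF refl])
    show "closed (C k)" for k
      unfolding C_def using \<open>closed S\<close> \<open>continuous_on S f\<close>
      by (intro continuous_on_closed_Collect_le continuous_on_const)
    show "convex (C k)" for k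
      unfolding C_def using \<open>convex_on S f\<close> by (rule convex_on_sublevel)
    show "C k \<noteq> {}" for k
    proof -
      have "m < m + 1 / real (Suc k)" by simp
      then obtain w where "w \<in> S" "f w < m + 1 / real (Suc k)"
        using cInf_lessD[of "f ` S"] \<open>S \<noteq> {}\<close> unfolding m_def by blast
      then have "w \<in> C k" unfolding C_def by simp
      then show ?thesis by blast
    qed
    show "decseq C"
    proof (rule decseq_SucI)
      fix k
      have "1 / real (Suc (Suc k)) \<le> 1 / real (Suc k)" by (rule divide_left_mono) auto
      then show "C (Suc k) \<subseteq> C k" unfolding C_def by auto
    qed
    show "bounded (C 0)" unfolding C_def by (rule coercive)
  qed
  then obtain z where z: "\<And>k. z \<in> C k" by blast
  have "f z \<le> m"
  proof (rule ccontr)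
    assume "\<not> f z \<le> m"
    then obtain n where "inverse (real (Suc n)) < f z - m"
      using reals_Archimedean[of "f z - m"] by auto
    then show False using z[of n] by (simp add: C_def inverse_eq_divide)
  qed
  moreover have "m \<le> f w" if "w \<in> S" for w
    unfolding m_def using cInf_lower[of "f w" "f ` S"] \<open>bdd_below (f ` S)\<close> that by simp
  moreover have "z \<in> S" using z[of 0] unfolding C_def by simp
  ultimately show ?thesis by (meson order_trans)
qed

section \<open>Upper bounds of a pair in an ordered normed space\<close>

lemma is_cone_convex: "is_cone K \<Longrightarrow> convex K"
  using convex_cone unfolding is_cone_def by blast

lemma proper_coneD: "proper_cone K \<Longrightarrow> w \<in> K \<Longrightarrow> - w \<in> K \<Longrightarrow> w = 0"
  unfolding proper_cone_def by (metis IntI image_eqI minus_minus singletonD)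

lemma upper_bounds_eq_INT: "upper_bounds K A = (\<Inter>a\<in>A. (+) a ` K)"
  unfolding upper_bounds_def cone_le_def by (force simp: image_iff)

lemma mem_upper_bounds_pair: "z \<in> upper_bounds K {x, y} \<longleftrightarrow> z - x \<in> K \<and> z - y \<in> K"
  by (simp add: upper_bounds_def cone_le_def)

lemma convex_upper_bounds: "is_cone K \<Longrightarrow> convex (upper_bounds K A)"
  by (simp add: upper_bounds_eq_INT convex_INT convex_translation is_cone_convex)

lemma closed_upper_bounds:
  fixes K :: "'a::real_normed_vector set"
  shows "closed K \<Longrightarrow> closed (upper_bounds K A)"
  by (simp add: upper_bounds_eq_INT closed_INT closed_translation)

lemma upper_bounds_pair_nonempty:
  assumes "generating_cone K"
  shows "upper_bounds K {x, y} \<noteq> {}"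
proof -
  obtain p q where "p \<in> K" "q \<in> K" "x - y = p - q"
    using assms unfolding generating_cone_def by blast
  moreover have "x + q - y = (x - y) + q" by (simp add: algebra_simps)
  ultimately have "x + q \<in> upper_bounds K {x, y}"
    by (simp add: mem_upper_bounds_pair)
  then show ?thesis by blast
qed

lemma continuous_on_sigma: "continuous_on S (sigma x y)"
  unfolding sigma_def by (intro continuous_intros)

lemma convex_on_sigma: "convex S \<Longrightarrow> convex_on S (sigma x y)"
proof -
  assume "convex S"
  have "sigma x y = (\<lambda>z. dist x z + dist y z)"
    by (auto simp: sigma_def dist_norm norm_minus_commute)
  then show ?thesis using \<open>convex S\<close> by (simp add: convex_on_add convex_on_dist)
qed

lemma bounded_sigma_sublevel: "bounded {w. sigma x y w \<le> c}"
  unfolding bounded_iff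
proof (intro exI ballI)
  fix w assume "w \<in> {w. sigma x y w \<le> c}"
  then have "norm (w - x) + norm (w - y) \<le> c" by (simp add: sigma_def)
  then show "norm w \<le> c + norm x"
    using norm_triangle_sub[of w x] norm_ge_zero[of "w - y"] by linarith
qed

section \<open>Uniqueness of the minimiser under strict convexity\<close>

lemma norm_add_eq_imp_diff_in_cone:
  fixes a b :: "'a::real_normed_vector"
  assumes sc: "strictly_convex TYPE('a)" and K: "is_cone K" and "a \<in> K" "b \<in> K"
    and add: "norm (a + b) = norm a + norm b" and le: "norm b \<le> norm a"
  shows "a - b \<in> K"
proof -
  have scale: "c *\<^sub>R v \<in> K" if "v \<in> K" "c \<ge> 0" for v c
    using K that unfolding is_cone_def by blast
  consider c where "c \<ge> 0" "a = c *\<^sub>R b" | c where "c \<ge> 0" "b = c *\<^sub>R a"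
    using sc add unfolding strictly_convex_def by blast
  then show ?thesis
  proof cases
    case (1 c)
    show ?thesis
    proof (cases "b = 0")
      case False
      then have "c \<ge> 1" using le 1 by simp
      then show ?thesis using scale[OF \<open>b \<in> K\<close>, of "c - 1"] 1 by (simp add: algebra_simps)
    qed (use \<open>a \<in> K\<close> in simp)
  next
    case (2 c)
    show ?thesis
    proof (cases "a = 0")
      case True
      then show ?thesis using le scale[OF \<open>a \<in> K\<close>, of 0] by simp
    next
      case False
      then have "c \<le> 1" using le 2 by simp
      then show ?thesis using scale[OF \<open>a \<in> K\<close>, of "1 - c"] 2 by (simp add: algebra_simps)
    qed
  qed
qed

lemma sigma_minimizer_unique:
  fixes x y :: "'a::real_normed_vector" and K :: "'a set"
  defines "U \<equiv> upper_bounds K {x, y}"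
  assumes sc: "strictly_convex TYPE('a)" and K: "is_cone K" "proper_cone K"
    and z1: "z1 \<in> U" "\<forall>w\<in>U. sigma x y z1 \<le> sigma x y w"
    and z2: "z2 \<in> U" "\<forall>w\<in>U. sigma x y z2 \<le> sigma x y w"
  shows "z1 = z2"
proof -
  define a b a' b' where "a = z1 - x" "b = z2 - x" "a' = z1 - y" "b' = z2 - y"
  have in_K: "a \<in> K" "b \<in> K" "a' \<in> K" "b' \<in> K"
    using z1(1) z2(1) unfolding U_def a_b_a'_b'_def mem_upper_bounds_pair by auto
  let ?m = "(1/2::real) *\<^sub>R z1 + (1/2::real) *\<^sub>R z2"
  have "?m \<in> U"
    using convexD[OF convex_upper_bounds[OF K(1)] z1(1)[unfolded U_def] z2(1)[unfolded U_def]]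
    unfolding U_def by simp
  then have "sigma x y z1 \<le> sigma x y ?m" using z1(2) by blast
  moreover have "2 * sigma x y ?m = norm (a + b) + norm (a' + b')"
  proof -
    have "?m - x = (1/2::real) *\<^sub>R (a + b)" "?m - y = (1/2::real) *\<^sub>R (a' + b')"
      unfolding a_b_a'_b'_def by (simp_all add: algebra_simps flip: scaleR_add_left)
    then show ?thesis by (simp add: sigma_def)
  qed
  moreover have "sigma x y z1 = sigma x y z2"
    using z1 z2 by (intro order_antisym) auto
  then have eq: "norm a + norm a' = norm b + norm b'"
    unfolding a_b_a'_b'_def sigma_def by simp
  ultimately have "norm (a + b) + norm (a' + b') \<ge> norm a + norm a' + norm b + norm b'"
    unfolding sigma_def a_b_a'_b'_def by argo
  then have "norm (a + b) = norm a + norm b" "norm (a' + b') = norm a' + norm b'"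
    using norm_triangle_ineq[of a b] norm_triangle_ineq[of a' b'] by linarith+
  then have add: "norm (a + b) = norm a + norm b" "norm (b + a) = norm b + norm a"
    "norm (a' + b') = norm a' + norm b'" "norm (b' + a') = norm b' + norm a'"
    by (simp_all add: add.commute)
  note diff_in_K = norm_add_eq_imp_diff_in_cone[OF sc K(1)]
  have "z1 - z2 \<in> K \<and> - (z1 - z2) \<in> K"
  proof (cases "norm b \<le> norm a")
    case True
    then have "norm a' \<le> norm b'" using eq by linarith
    then have "a - b \<in> K" "b' - a' \<in> K"
      using diff_in_K[OF in_K(1,2) add(1) True] diff_in_K[OF in_K(4,3) add(4)] by auto
    then show ?thesis unfolding a_b_a'_b'_def by simp
  next
    case False
    then have "norm b' \<le> norm a'" using eq by linarith
    then have "b - a \<in> K" "a' - b' \<in> K"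
      using diff_in_K[OF in_K(2,1) add(2)] False diff_in_K[OF in_K(3,4) add(3)] by auto
    then show ?thesis unfolding a_b_a'_b'_def by simp
  qed
  then show ?thesis using proper_coneD[OF K(2), of "z1 - z2"] by simp
qed

theorem theorem6p1:
  fixes K :: "'a::banach set"
  assumes "strictly_convex TYPE('a)"
    and "reflexive_space TYPE('a)"
    and "is_cone K"
    and "closed K"
    and "proper_cone K"
    and "generating_cone K"
  shows "upsilon_quasi_lattice K"
  unfolding upsilon_quasi_lattice_def
proof (intro conjI allI)
  show "closed K" by fact
  fix x y :: 'a
  let ?U = "upper_bounds K {x, y}"
  show "?U \<noteq> {}" using \<open>generating_cone K\<close> by (rule upper_bounds_pair_nonempty)
  have "convex ?U" using \<open>is_cone K\<close> by (rule convex_upper_bounds)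
  have "bdd_below (sigma x y ` ?U)"
    by (rule bdd_belowI[of _ 0]) (auto simp: sigma_def)
  moreover have "bounded {w \<in> ?U. sigma x y w \<le> c}" for c
    by (rule bounded_subset[OF bounded_sigma_sublevel]) blast
  ultimately obtain z where z: "z \<in> ?U" "\<forall>w\<in>?U. sigma x y z \<le> sigma x y w"
    using reflexive_convex_on_attains_min[OF \<open>reflexive_space TYPE('a)\<close>
        closed_upper_bounds[OF \<open>closed K\<close>] \<open>?U \<noteq> {}\<close>
        continuous_on_sigma convex_on_sigma[OF \<open>convex ?U\<close>]]
    by blast
  then show "\<exists>!z. z \<in> ?U \<and> (\<forall>w\<in>?U. sigma x y z \<le> sigma x y w)"
    using sigma_minimizer_unique[OF assms(1,3,5)] by (intro ex1I[of _ z]) blast+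
qed

end
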